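(* Let $d\ge2$ and suppose $Q(z)=z^d+t$ ($t\in\mathbb{C}$) is post-critically finite. Let $\lambda\neq0$ be the multiplier of some periodic orbit of $Q$. Then $\lambda$ belongs to some number field $\mathbb{K}$, and for any non-Archimedean place $v$ of $\mathbb{K}$: $|\lambda|_v<1$ if the residual characteristic of $\mathbb{K}_v$ divides $d$, and $|\lambda|_v=1$ if the residual characteristic of $\mathbb{K}_v$ is prime to $d$.
   Context: A polynomial is post-critically finite if all its critical points have finite forward orbits. *)

theory Defs
  imports "HOL-Analysis.Analysis" "HOL-Computational_Algebra.Polynomial"
begin

definition post_critically_finite :: "complex poly \<Rightarrow> bool" where
  "post_critically_finite p \<longleftrightarrow>
     (\<forall>c. poly (pderiv p) c = 0 \<longrightarrow> finite (range (\<lambda>n. (poly p ^^ n) c)))"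

definition periodic_multiplier :: "complex poly \<Rightarrow> complex \<Rightarrow> bool" where
  "periodic_multiplier p lam \<longleftrightarrow>
     (\<exists>z n. n > 0 \<and> (poly p ^^ n) z = z \<and>
        (\<forall>m. 0 < m \<and> m < n \<longrightarrow> (poly p ^^ m) z \<noteq> z) \<and>
        lam = deriv (poly p ^^ n) z)"

definition number_field :: "complex set \<Rightarrow> bool" where
  "number_field K \<longleftrightarrow>
     0 \<in> K \<and> 1 \<in> K \<and>
     (\<forall>x\<in>K. \<forall>y\<in>K. x + y \<in> K \<and> x * y \<in> K) \<and>
     (\<forall>x\<in>K. - x \<in> K) \<and> (\<forall>x\<in>K. x \<noteq> 0 \<longrightarrow> inverse x \<in> K) \<and>
     (\<exists>B. finite B \<and> B \<subseteq> K \<and>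
        (\<forall>x\<in>K. \<exists>c::complex \<Rightarrow> rat. x = (\<Sum>b\<in>B. of_rat (c b) * b)))"

text \<open>A nontrivial non-Archimedean absolute value on K (values outside K are
  irrelevant). Non-Archimedean places of K are equivalence classes of these;
  the conditions in the theorem are invariant under equivalence.\<close>
definition nonarch_abs :: "complex set \<Rightarrow> (complex \<Rightarrow> real) \<Rightarrow> bool" where
  "nonarch_abs K v \<longleftrightarrow>
     (\<forall>x\<in>K. v x \<ge> 0) \<and> (\<forall>x\<in>K. v x = 0 \<longleftrightarrow> x = 0) \<and>
     (\<forall>x\<in>K. \<forall>y\<in>K. v (x * y) = v x * v y) \<and>
     (\<forall>x\<in>K. \<forall>y\<in>K. v (x + y) \<le> max (v x) (v y)) \<and>
     (\<exists>x\<in>K. x \<noteq> 0 \<and> v x \<noteq> 1)"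

text \<open>Residual characteristic: the characteristic of the residue field
  {x. v x \<le> 1} / {x. v x < 1}, i.e. the least positive n with n*1 in the
  maximal ideal.\<close>
definition residual_char :: "(complex \<Rightarrow> real) \<Rightarrow> nat" where
  "residual_char v = (LEAST n::nat. 0 < n \<and> v (of_nat n) < 1)"

end

theory Submission
  imports Defs
begin

text \<open>
  The orbit of the critical point \<open>0\<close> is finite, so \<open>Q\<^sup>a(0) = Q\<^sup>b(0)\<close> for some
  \<open>a < b\<close>; read as polynomials in \<open>t\<close>, their difference is monic with integer
  coefficients, so \<open>t\<close> is an algebraic integer. A point \<open>z\<close> of period \<open>n\<close> is a root of
  \<open>Q\<^sup>n(x) - x\<close>, monic over \<open>\<int>[t]\<close>. Hence \<open>t\<close>, \<open>z\<close> and the multiplier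
  \<open>\<lambda> = \<Prod>\<^sub>j\<^sub><\<^sub>n d Q\<^sup>j(z)\<^sup>d\<^sup>-\<^sup>1\<close> lie in a number field \<open>K\<close>.

  Let \<open>|_|\<close> be a non-Archimedean absolute value on \<open>K\<close>. If \<open>|t| > 1\<close> the orbit of \<open>0\<close>
  escapes, and so does every point with \<open>|z| > 1\<close>; hence \<open>|t| \<le> 1\<close>, every periodic
  point satisfies \<open>|z| \<le> 1\<close>, and \<open>|\<lambda>| \<le> |d|\<^sup>n\<close>, which is \<open>< 1\<close> when the residual
  characteristic divides \<open>d\<close>. If it is prime to \<open>d\<close>, then \<open>|d| = 1\<close>, and \<open>Q\<close> is
  1-Lipschitz on the closed unit disc and strictly contracting on the open one. Suppose
  a point of the cycle has \<open>|z| < 1\<close>, and take one of least absolute value. The orbits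
  of \<open>0\<close> and \<open>z\<close> must meet, since otherwise \<open>|Q\<^sup>k\<^sup>n(0) - z|\<close> would decrease strictly
  forever. At the first meeting time \<open>m + 1\<close>, \<open>Q\<^sup>m(0)\<^sup>d = Q\<^sup>m(z)\<^sup>d\<close> although
  \<open>Q\<^sup>m(0) \<noteq> Q\<^sup>m(z)\<close>; as \<open>d\<close> is a unit, their distance is at least
  \<open>|Q\<^sup>m(z)| \<ge> |z|\<close>, whereas the contraction has already pushed it below \<open>|z|\<close>.
\<close>

section \<open>Finite-dimensional \<open>\<rat>\<close>-subalgebras of \<open>\<complex>\<close>\<close>

definition rat_scale :: "rat \<Rightarrow> complex \<Rightarrow> complex" where
  "rat_scale q x = of_rat q * x"

interpretation Q: vector_space rat_scale
  by unfold_locales (auto simp: rat_scale_def algebra_simps of_rat_add of_rat_mult)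

lemma Q_span_mult_closed:
  assumes "\<And>a b. a \<in> A \<Longrightarrow> b \<in> B \<Longrightarrow> a * b \<in> Q.span C"
    and "x \<in> Q.span A" and "y \<in> Q.span B"
  shows "x * y \<in> Q.span C"
  using \<open>x \<in> Q.span A\<close>
proof (induct rule: Q.span_induct_alt)
  case (step c a x)
  have "a * y \<in> Q.span C" using \<open>y \<in> Q.span B\<close>
  proof (induct rule: Q.span_induct_alt)
    case (step c' b y')
    have "a * (rat_scale c' b + y') = rat_scale c' (a * b) + a * y'"
      by (simp add: rat_scale_def algebra_simps)
    then show ?case using step assms(1)[OF \<open>a \<in> A\<close>] by (simp add: Q.span_add Q.span_scale)
  qed (simp add: Q.span_zero)
  moreover have "(rat_scale c a + x) * y = rat_scale c (a * y) + x * y"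
    by (simp add: rat_scale_def algebra_simps)
  ultimately show ?case using step by (simp add: Q.span_add Q.span_scale)
qed (simp add: Q.span_zero)

lemma Q_span_of_rat: "1 \<in> Q.span S \<Longrightarrow> of_rat q \<in> Q.span S"
  using Q.span_scale[of 1 S q] by (simp add: rat_scale_def)

lemma Q_span_sum_of_rat:
  "(\<Sum>b\<in>B. of_rat (c b) * b) \<in> Q.span B"
  unfolding rat_scale_def[symmetric] by (intro Q.span_sum Q.span_scale Q.span_base)

lemma Q_dependent_powers:
  assumes "finite B" and "\<And>i. x ^ i \<in> Q.span B"
  shows "\<exists>c N. (\<exists>i\<le>N. c i \<noteq> 0) \<and> (\<Sum>i\<le>N. of_rat (c i) * x ^ i) = 0"
proof (cases "inj_on (\<lambda>i. x ^ i) {..card B}")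
  case True
  let ?P = "(\<lambda>i. x ^ i) ` {..card B}"
  have "\<not> card ?P \<le> card B" using True by (simp add: card_image)
  then have "Q.dependent ?P"
    using Q.independent_span_bound[OF \<open>finite B\<close>] assms(2) by auto
  then obtain u where u: "\<exists>y\<in>?P. u y \<noteq> 0" "(\<Sum>y\<in>?P. rat_scale (u y) y) = 0"
    using Q.dependent_finite[of ?P] by auto
  define c where "c i = u (x ^ i)" for i
  have "(\<Sum>i\<le>card B. of_rat (c i) * x ^ i) = (\<Sum>y\<in>?P. rat_scale (u y) y)"
    by (simp add: sum.reindex[OF True] c_def rat_scale_def)
  moreover from u(1) obtain i where "i \<le> card B" "c i \<noteq> 0" by (auto simp: c_def)
  ultimately show ?thesis using u(2) by metis
next
  case False
  then obtain i j where ij: "i \<le> card B" "j \<le> card B" "i \<noteq> j" "x ^ i = x ^ j"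
    by (auto simp: inj_on_def)
  define c where "c k = (if k = i then 1 else if k = j then -1 else 0 :: rat)" for k
  have "\<And>k. of_rat (c k) * x ^ k = (if k = i then x ^ i else 0) - (if k = j then x ^ j else 0)"
    using ij(3) by (auto simp: c_def)
  then have "(\<Sum>k\<le>card B. of_rat (c k) * x ^ k) = 0"
    using ij by (simp add: sum_subtractf)
  moreover have "c i \<noteq> 0" by (simp add: c_def)
  ultimately show ?thesis using ij(1) by blast
qed

definition spans_subalgebra :: "complex set \<Rightarrow> bool" where
  "spans_subalgebra S \<longleftrightarrow> finite S \<and> 1 \<in> Q.span S \<and> (\<forall>a\<in>S. \<forall>b\<in>S. a * b \<in> Q.span S)"

lemma spans_subalgebra_one: "spans_subalgebra {1}"
  by (auto simp: spans_subalgebra_def Q.span_base)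

context
  fixes S :: "complex set"
  assumes S: "spans_subalgebra S"
begin

lemma spans_subalgebra_one_in: "1 \<in> Q.span S"
  using S by (simp add: spans_subalgebra_def)

lemma spans_subalgebra_mult:
  assumes "x \<in> Q.span S" "y \<in> Q.span S"
  shows "x * y \<in> Q.span S"
  by (rule Q_span_mult_closed[OF _ assms]) (use S in \<open>auto simp: spans_subalgebra_def\<close>)

lemma spans_subalgebra_power: "x \<in> Q.span S \<Longrightarrow> x ^ n \<in> Q.span S"
  by (induct n) (auto simp: spans_subalgebra_one_in spans_subalgebra_mult)

text \<open>A rational relation with nonzero constant term exhibits an inverse as a
  polynomial in \<open>x\<close>; otherwise \<open>x\<close> can be cancelled from the relation.\<close>
lemma spans_subalgebra_right_inverse:
  assumes x: "x \<in> Q.span S" "x \<noteq> 0"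
  shows "(\<exists>i\<le>N. c i \<noteq> 0) \<Longrightarrow> (\<Sum>i\<le>N. of_rat (c i) * x ^ i) = 0 \<Longrightarrow> \<exists>y\<in>Q.span S. x * y = 1"
proof (induct N arbitrary: c)
  case (Suc N)
  let ?w = "\<Sum>i\<le>N. of_rat (c (Suc i)) * x ^ i"
  have split: "(\<Sum>i\<le>Suc N. of_rat (c i) * x ^ i) = of_rat (c 0) + x * ?w"
    by (simp only: sum.atMost_Suc_shift sum_distrib_left) (simp add: ac_simps)
  show ?case
  proof (cases "c 0 = 0")
    case True
    obtain i where i: "i \<le> Suc N" "c i \<noteq> 0" using Suc.prems(1) by blast
    with True obtain i' where "i = Suc i'" by (cases i) auto
    with i have "\<exists>i\<le>N. c (Suc i) \<noteq> 0" by auto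
    moreover have "?w = 0" using Suc.prems split x(2) True by simp
    ultimately show ?thesis using Suc.hyps[of "\<lambda>i. c (Suc i)"] by blast
  next
    case False
    have w: "?w \<in> Q.span S"
      by (intro Q.span_sum spans_subalgebra_mult Q_span_of_rat spans_subalgebra_one_in
          spans_subalgebra_power x(1))
    have xw: "x * ?w = - of_rat (c 0)" using Suc.prems(2) split by (simp add: add_eq_0_iff)
    have "x * (- of_rat (inverse (c 0)) * ?w) = - of_rat (inverse (c 0)) * (x * ?w)"
      by (simp add: algebra_simps)
    also have "\<dots> = 1" using False by (simp add: xw of_rat_inverse)
    finally have "x * (- of_rat (inverse (c 0)) * ?w) = 1" .
    then show ?thesis
      by (intro bexI[of _ "- of_rat (inverse (c 0)) * ?w"] spans_subalgebra_mult Q.span_neg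
          Q_span_of_rat spans_subalgebra_one_in w)
  qed
qed simp

lemma number_field_Q_span: "number_field (Q.span S)"
  unfolding number_field_def
proof (intro conjI ballI impI)
  have fin: "finite S" using S by (simp add: spans_subalgebra_def)
  fix x assume x: "x \<in> Q.span S"
  { fix y assume "y \<in> Q.span S"
    then show "x + y \<in> Q.span S" "x * y \<in> Q.span S"
      using x by (auto simp: Q.span_add spans_subalgebra_mult) }
  { assume "x \<noteq> 0"
    moreover obtain c N where "\<exists>i\<le>N. c i \<noteq> 0" "(\<Sum>i\<le>N. of_rat (c i) * x ^ i) = 0"
      using Q_dependent_powers[OF fin spans_subalgebra_power[OF x]] by blast
    ultimately obtain y where "y \<in> Q.span S" "x * y = 1"
      using spans_subalgebra_right_inverse[OF x] by blast
    then show "inverse x \<in> Q.span S" using inverse_unique by metis }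
  show "- x \<in> Q.span S" using x by (rule Q.span_neg)
next
  have fin: "finite S" using S by (simp add: spans_subalgebra_def)
  show "\<exists>B. finite B \<and> B \<subseteq> Q.span S \<and> (\<forall>x\<in>Q.span S. \<exists>c. x = (\<Sum>b\<in>B. of_rat (c b) * b))"
  proof (intro exI[of _ S] conjI ballI fin Q.span_superset)
    fix x assume "x \<in> Q.span S"
    then show "\<exists>c. x = (\<Sum>b\<in>S. of_rat (c b) * b)"
      unfolding Q.span_finite[OF fin] by (auto simp: rat_scale_def)
  qed
qed (auto simp: Q.span_zero spans_subalgebra_one_in)

end

definition poly_over :: "complex set \<Rightarrow> complex poly \<Rightarrow> bool" where
  "poly_over R p \<longleftrightarrow> (\<forall>i. coeff p i \<in> R)"

definition integral_over :: "complex set \<Rightarrow> complex \<Rightarrow> bool" where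
  "integral_over R y \<longleftrightarrow>
     (\<exists>p. poly_over R p \<and> lead_coeff p = 1 \<and> poly p y = 0)"

lemma monic_root_power_eq:
  fixes p :: "'a::comm_ring_1 poly"
  assumes "lead_coeff p = 1" "poly p y = 0"
  shows "y ^ degree p = (\<Sum>k<degree p. (- coeff p k) * y ^ k)"
proof -
  have "0 = (\<Sum>k<degree p. coeff p k * y ^ k) + y ^ degree p"
    using assms poly_altdef[of p y] by (simp add: lessThan_Suc_atMost[symmetric])
  then show ?thesis by (simp add: sum_negf add_eq_0_iff)
qed

definition adjoin_gens :: "complex set \<Rightarrow> complex \<Rightarrow> nat \<Rightarrow> complex set" where
  "adjoin_gens S y N = (\<lambda>(s, i). s * y ^ i) ` (S \<times> {..<N})"

text \<open>Powers \<open>y ^ j\<close> with \<open>j \<ge> degree p\<close> reduce by the monic relation \<open>p(y) = 0\<close>.\<close>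
lemma mult_power_in_span_adjoin_gens:
  assumes S: "spans_subalgebra S"
    and p: "poly_over (Q.span S) p" "lead_coeff p = 1" "poly p y = 0"
  shows "q \<in> Q.span S \<Longrightarrow> q * y ^ j \<in> Q.span (adjoin_gens S y (degree p))"
proof (induct j arbitrary: q rule: less_induct)
  case (less j)
  let ?N = "degree p" and ?S' = "adjoin_gens S y (degree p)"
  show ?case
  proof (cases "j < ?N")
    case True
    have "a * y ^ j \<in> ?S'" if "a \<in> S" for a
      using that True unfolding adjoin_gens_def by force
    then show ?thesis
      by (intro Q_span_mult_closed[of S "{y ^ j}", OF _ less.prems]) (auto intro: Q.span_base)
  next
    case False
    have "y ^ j = y ^ (j - ?N) * y ^ ?N" using False by (simp add: power_add[symmetric])
    then have "q * y ^ j = (\<Sum>k<?N. (q * - coeff p k) * y ^ (j - ?N + k))"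
      by (simp add: monic_root_power_eq[OF p(2,3)] sum_distrib_left power_add algebra_simps)
    also have "\<dots> \<in> Q.span ?S'"
    proof (rule Q.span_sum)
      fix k assume "k \<in> {..<?N}"
      then show "(q * - coeff p k) * y ^ (j - ?N + k) \<in> Q.span ?S'"
        using False less.prems p(1) unfolding poly_over_def
        by (intro less.hyps spans_subalgebra_mult[OF S] Q.span_neg) auto
    qed
    finally show ?thesis .
  qed
qed

lemma spans_subalgebra_adjoin:
  assumes S: "spans_subalgebra S" and y: "integral_over (Q.span S) y"
  shows "\<exists>S'. spans_subalgebra S' \<and> Q.span S \<subseteq> Q.span S' \<and> y \<in> Q.span S'"
proof -
  obtain p where p: "poly_over (Q.span S) p" "lead_coeff p = 1" "poly p y = 0"
    using y by (auto simp: integral_over_def)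
  define S' where "S' = adjoin_gens S y (degree p)"
  note key = mult_power_in_span_adjoin_gens[OF S p, folded S'_def]
  have sub: "Q.span S \<subseteq> Q.span S'" using key[of _ 0] by auto
  have "spans_subalgebra S'"
    unfolding spans_subalgebra_def
  proof (intro conjI ballI)
    show "finite S'" using S unfolding S'_def adjoin_gens_def spans_subalgebra_def by auto
    show "1 \<in> Q.span S'" using sub spans_subalgebra_one_in[OF S] by auto
    fix a b assume "a \<in> S'" "b \<in> S'"
    then obtain s i s' i' where "s \<in> S" "s' \<in> S" "a = s * y ^ i" "b = s' * y ^ i'"
      unfolding S'_def adjoin_gens_def by auto
    then have "a * b = (s * s') * y ^ (i + i')" by (simp add: power_add algebra_simps)
    moreover have "s * s' \<in> Q.span S"
      using \<open>s \<in> S\<close> \<open>s' \<in> S\<close> by (intro spans_subalgebra_mult[OF S] Q.span_base)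
    ultimately show "a * b \<in> Q.span S'" using key by simp
  qed
  moreover have "y \<in> Q.span S'" using key[OF spans_subalgebra_one_in[OF S], of 1] by simp
  ultimately show ?thesis using sub by blast
qed

lemma poly_over_add: "poly_over (Q.span S) p \<Longrightarrow> poly_over (Q.span S) q \<Longrightarrow> poly_over (Q.span S) (p + q)"
  and poly_over_diff: "poly_over (Q.span S) p \<Longrightarrow> poly_over (Q.span S) q \<Longrightarrow> poly_over (Q.span S) (p - q)"
  by (simp_all add: poly_over_def Q.span_add Q.span_diff)

lemma poly_over_const: "c \<in> Q.span S \<Longrightarrow> poly_over (Q.span S) [:c:]"
  unfolding poly_over_def by (auto simp: coeff_pCons Q.span_zero split: nat.splits)

context
  fixes S :: "complex set"
  assumes S: "spans_subalgebra S"
begin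

lemma poly_over_X: "poly_over (Q.span S) [:0, 1:]"
  using spans_subalgebra_one_in[OF S]
  unfolding poly_over_def by (auto simp: coeff_pCons Q.span_zero split: nat.splits)

lemma poly_over_mult: "poly_over (Q.span S) p \<Longrightarrow> poly_over (Q.span S) q \<Longrightarrow> poly_over (Q.span S) (p * q)"
  unfolding poly_over_def coeff_mult by (auto intro!: Q.span_sum spans_subalgebra_mult[OF S])

lemma poly_over_power: "poly_over (Q.span S) p \<Longrightarrow> poly_over (Q.span S) (p ^ n)"
proof (induct n)
  case 0
  show ?case using spans_subalgebra_one_in[OF S] by (simp add: poly_over_def coeff_1 Q.span_zero)
qed (simp add: poly_over_mult)

end

section \<open>Algebraicity of the parameter and of the periodic points\<close>

lemma monic_power_add_lower_degree:
  fixes p c :: "'a::idom poly"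
  assumes "degree p = m" "coeff p m = 1" and "degree c < n * m"
  shows "degree (p ^ n + c) = n * m" "coeff (p ^ n + c) (n * m) = 1"
proof -
  have "p \<noteq> 0" using assms(2) by auto
  then have deg: "degree (p ^ n) = n * m" using assms(1) by (simp add: degree_power_eq)
  then have lt: "degree c < degree (p ^ n)" using assms(3) by simp
  show "degree (p ^ n + c) = n * m" using degree_add_eq_left[OF lt] deg by simp
  have "coeff (p ^ n) (n * m) = 1" using lead_coeff_power[of p n] assms(1,2) deg by simp
  then show "coeff (p ^ n + c) (n * m) = 1" using assms(3) by (simp add: coeff_eq_0)
qed

lemma monic_diff_lower_degree:
  fixes p q :: "'a::comm_ring_1 poly"
  assumes "degree p = m" "coeff p m = 1" and "degree q < m"
  shows "degree (p - q) = m" "coeff (p - q) m = 1"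
proof -
  have "degree (- q) < degree p" using assms(1,3) by simp
  from degree_add_eq_left[OF this] show "degree (p - q) = m" using assms(1) by (simp add: add.commute)
  show "coeff (p - q) m = 1" using assms by (simp add: coeff_eq_0)
qed

primrec zero_orbit_poly :: "nat \<Rightarrow> nat \<Rightarrow> complex poly" where
  "zero_orbit_poly d 0 = 0"
| "zero_orbit_poly d (Suc j) = zero_orbit_poly d j ^ d + [:0, 1:]"

primrec iterate_poly :: "nat \<Rightarrow> complex \<Rightarrow> nat \<Rightarrow> complex poly" where
  "iterate_poly d t 0 = [:0, 1:]"
| "iterate_poly d t (Suc j) = iterate_poly d t j ^ d + [:t:]"

lemma poly_zero_orbit_poly: "poly (zero_orbit_poly d j) t = ((\<lambda>x. x ^ d + t) ^^ j) 0"
  by (induct j) auto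

lemma poly_iterate_poly: "poly (iterate_poly d t j) x = ((\<lambda>x. x ^ d + t) ^^ j) x"
  by (induct j) auto

lemma degree_zero_orbit_poly:
  assumes "d \<ge> 2"
  shows "degree (zero_orbit_poly d (Suc j)) = d ^ j \<and> coeff (zero_orbit_poly d (Suc j)) (d ^ j) = 1"
proof (induct j)
  case 0
  then show ?case using assms by (simp add: power_0_left)
next
  case (Suc j)
  have "1 < d ^ Suc j" using assms by (intro one_less_power) auto
  then have "degree [:0, 1::complex:] < d * d ^ j" by simp
  from monic_power_add_lower_degree[OF conjunct1[OF Suc] conjunct2[OF Suc] this]
  show ?case by (simp only: zero_orbit_poly.simps(2)[of d "Suc j"] power_Suc)
qed

lemma degree_iterate_poly:
  assumes "d \<ge> 2"
  shows "degree (iterate_poly d t j) = d ^ j \<and> coeff (iterate_poly d t j) (d ^ j) = 1"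
proof (induct j)
  case (Suc j)
  have "degree [:t:] < d * d ^ j" using assms by simp
  from monic_power_add_lower_degree[OF conjunct1[OF Suc] conjunct2[OF Suc] this]
  show ?case by (simp only: iterate_poly.simps(2) power_Suc)
qed simp

lemma poly_over_zero_orbit_poly: "poly_over (Q.span {1}) (zero_orbit_poly d j)"
proof (induct j)
  case 0
  show ?case by (simp add: poly_over_def Q.span_zero)
next
  case (Suc j)
  then show ?case
    by (simp add: poly_over_add poly_over_power poly_over_X spans_subalgebra_one)
qed

lemma poly_over_iterate_poly:
  "spans_subalgebra S \<Longrightarrow> t \<in> Q.span S \<Longrightarrow> poly_over (Q.span S) (iterate_poly d t j)"
  by (induct j) (simp_all add: poly_over_X poly_over_add poly_over_power poly_over_const)

text \<open>If the orbit of \<open>0\<close> repeats, \<open>Q\<^sup>a(0) = Q\<^sup>b(0)\<close> with \<open>a < b\<close>, and the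
  difference of the two orbit polynomials is monic in \<open>t\<close>.\<close>
lemma finite_zero_orbit_imp_integral:
  assumes d: "d \<ge> 2" and fin: "finite (range (\<lambda>m. ((\<lambda>x. x ^ d + t) ^^ m) 0))"
  shows "integral_over (Q.span {1}) t"
proof -
  have "\<not> inj (\<lambda>m. ((\<lambda>x. x ^ d + t) ^^ m) 0)"
    using fin finite_imageD infinite_UNIV_nat by blast
  then obtain a b where ab: "a < b" "((\<lambda>x. x ^ d + t) ^^ a) 0 = ((\<lambda>x. x ^ d + t) ^^ b) 0"
    unfolding inj_def by (metis linorder_neqE_nat)
  then obtain b' where b': "b = Suc b'" by (cases b) auto
  have P: "degree (zero_orbit_poly d b) = d ^ b'" "coeff (zero_orbit_poly d b) (d ^ b') = 1"
    using degree_zero_orbit_poly[OF d] b' by simp_all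
  have "degree (zero_orbit_poly d a) < d ^ b'"
  proof (cases a)
    case (Suc a')
    then have "d ^ a' < d ^ b'" using ab(1) b' d by (intro power_strict_increasing) auto
    then show ?thesis using degree_zero_orbit_poly[OF d, of a'] Suc by simp
  qed (use d in simp)
  note monic = monic_diff_lower_degree[OF P this]
  have "poly (zero_orbit_poly d b - zero_orbit_poly d a) t = 0"
    using ab(2) by (simp add: poly_zero_orbit_poly)
  then show ?thesis
    unfolding integral_over_def using monic
    by (intro exI[of _ "zero_orbit_poly d b - zero_orbit_poly d a"])
      (simp add: poly_over_diff poly_over_zero_orbit_poly)
qed

lemma periodic_point_integral:
  assumes d: "d \<ge> 2" and n: "n > 0" and S: "spans_subalgebra S" and t: "t \<in> Q.span S"
    and per: "((\<lambda>x. x ^ d + t) ^^ n) z = z"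
  shows "integral_over (Q.span S) z"
proof -
  have "1 < d ^ n" using d n by (intro one_less_power) auto
  then have "degree [:0, 1::complex:] < d ^ n" by simp
  note monic = monic_diff_lower_degree[OF conjunct1[OF degree_iterate_poly[OF d]]
      conjunct2[OF degree_iterate_poly[OF d]] this]
  have "poly (iterate_poly d t n - [:0, 1:]) z = 0"
    using per by (simp add: poly_iterate_poly)
  then show ?thesis
    unfolding integral_over_def using monic
    by (intro exI[of _ "iterate_poly d t n - [:0, 1:]"])
      (simp add: poly_over_diff poly_over_iterate_poly[OF S t] poly_over_X[OF S])
qed

lemma number_field_containing_periodic_point:
  assumes "d \<ge> 2" and "finite (range (\<lambda>m. ((\<lambda>x. x ^ d + t) ^^ m) 0))"
    and "n > 0" and "((\<lambda>x. x ^ d + t) ^^ n) z = z"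
  shows "\<exists>K. number_field K \<and> t \<in> K \<and> z \<in> K"
proof -
  obtain S where S: "spans_subalgebra S" "t \<in> Q.span S"
    using spans_subalgebra_adjoin[OF spans_subalgebra_one finite_zero_orbit_imp_integral[OF assms(1,2)]]
    by blast
  obtain S' where "spans_subalgebra S'" "Q.span S \<subseteq> Q.span S'" "z \<in> Q.span S'"
    using spans_subalgebra_adjoin[OF S(1) periodic_point_integral[OF assms(1,3) S assms(4)]]
    by blast
  then show ?thesis using S(2) number_field_Q_span by blast
qed

section \<open>Non-Archimedean absolute values on a number field\<close>

locale number_field_set =
  fixes K :: "complex set"
  assumes number_field: "number_field K"
begin

lemma K_zero: "0 \<in> K"
  and K_one: "1 \<in> K"
  and K_add: "x \<in> K \<Longrightarrow> y \<in> K \<Longrightarrow> x + y \<in> K"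
  and K_mult: "x \<in> K \<Longrightarrow> y \<in> K \<Longrightarrow> x * y \<in> K"
  and K_uminus: "x \<in> K \<Longrightarrow> - x \<in> K"
  using number_field by (simp_all add: number_field_def)

lemma K_inverse: "x \<in> K \<Longrightarrow> inverse x \<in> K"
  using number_field K_zero by (cases "x = 0") (auto simp: number_field_def)

lemma K_diff: "x \<in> K \<Longrightarrow> y \<in> K \<Longrightarrow> x - y \<in> K"
  using K_add[OF _ K_uminus[of y]] by simp

lemma K_power: "x \<in> K \<Longrightarrow> x ^ n \<in> K"
  by (induct n) (auto simp: K_one K_mult)

lemma K_sum: "(\<And>i. i \<in> A \<Longrightarrow> g i \<in> K) \<Longrightarrow> sum g A \<in> K"
  by (induct A rule: infinite_finite_induct) (auto simp: K_zero K_add)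

lemma K_prod: "(\<And>i. i \<in> A \<Longrightarrow> g i \<in> K) \<Longrightarrow> prod g A \<in> K"
  by (induct A rule: infinite_finite_induct) (auto simp: K_one K_mult)

lemma K_of_nat: "of_nat n \<in> K"
  by (induct n) (auto simp: K_zero K_one K_add)

lemma K_of_int: "of_int i \<in> K"
proof (cases i rule: int_cases)
  case (neg n)
  then have eq: "(of_int i :: complex) = - of_nat (Suc n)" by (simp only: of_int_minus of_int_of_nat_eq)
  show ?thesis unfolding eq by (rule K_uminus[OF K_of_nat])
qed (simp add: K_of_nat)

lemma K_of_rat: "of_rat q \<in> K"
proof -
  obtain a b where "quotient_of q = (a, b)" by (cases "quotient_of q") auto
  then have "q = of_int a / of_int b" by (rule quotient_of_div)
  then have "of_rat q = (of_int a :: complex) * inverse (of_int b)"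
    by (simp add: divide_inverse of_rat_mult of_rat_inverse)
  then show ?thesis using K_mult[OF K_of_int K_inverse[OF K_of_int]] by simp
qed

lemma K_algebraic:
  assumes "x \<in> K"
  shows "\<exists>c N. (\<exists>i\<le>N. c i \<noteq> 0) \<and> (\<Sum>i\<le>N. of_rat (c i) * x ^ i) = 0"
proof -
  obtain B where B: "finite B" "\<forall>y\<in>K. \<exists>c::complex \<Rightarrow> rat. y = (\<Sum>b\<in>B. of_rat (c b) * b)"
    using number_field unfolding number_field_def by blast
  have "x ^ i \<in> Q.span B" for i
    using B(2) K_power[OF assms, of i] Q_span_sum_of_rat by metis
  then show ?thesis using Q_dependent_powers[OF B(1)] by blast
qed

end

locale nonarch_place = number_field_set +
  fixes v :: "complex \<Rightarrow> real"
  assumes nonarch_abs: "nonarch_abs K v"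
begin

lemma v_nonneg: "x \<in> K \<Longrightarrow> v x \<ge> 0"
  and v_eq_0_iff: "x \<in> K \<Longrightarrow> v x = 0 \<longleftrightarrow> x = 0"
  and v_mult: "x \<in> K \<Longrightarrow> y \<in> K \<Longrightarrow> v (x * y) = v x * v y"
  and v_add: "x \<in> K \<Longrightarrow> y \<in> K \<Longrightarrow> v (x + y) \<le> max (v x) (v y)"
  and v_nontrivial: "\<exists>x\<in>K. x \<noteq> 0 \<and> v x \<noteq> 1"
  using nonarch_abs unfolding nonarch_abs_def by auto

lemma v_zero: "v 0 = 0"
  using v_eq_0_iff[OF K_zero] by simp

lemma v_one: "v 1 = 1"
  using v_mult[OF K_one K_one] v_eq_0_iff[OF K_one] by simp

lemma v_uminus: "x \<in> K \<Longrightarrow> v (- x) = v x"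
proof -
  have "(v (-1))\<^sup>2 = 1"
    using v_mult[OF K_uminus[OF K_one] K_uminus[OF K_one]] v_one by (simp add: power2_eq_square)
  then have "v (-1) = 1" using v_nonneg[OF K_uminus[OF K_one]] power2_eq_1_iff by force
  then show "x \<in> K \<Longrightarrow> v (- x) = v x" using v_mult[OF K_uminus[OF K_one], of x] by simp
qed

lemma v_diff: "x \<in> K \<Longrightarrow> y \<in> K \<Longrightarrow> v (x - y) \<le> max (v x) (v y)"
  using v_add[OF _ K_uminus[of y], of x] v_uminus[of y] by simp

lemma v_power: "x \<in> K \<Longrightarrow> v (x ^ n) = v x ^ n"
  by (induct n) (auto simp: v_one v_mult K_power)

lemma v_prod: "(\<And>i. i \<in> A \<Longrightarrow> g i \<in> K) \<Longrightarrow> v (prod g A) = (\<Prod>i\<in>A. v (g i))"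
  by (induct A rule: infinite_finite_induct) (auto simp: v_one v_mult K_prod)

lemma v_of_nat_le_one: "v (of_nat n) \<le> 1"
proof (induct n)
  case (Suc n)
  then show ?case using v_add[OF K_of_nat K_one, of n] v_one by (simp add: add.commute)
qed (simp add: v_zero)

lemma v_sum_le:
  assumes "\<And>i. i \<in> A \<Longrightarrow> g i \<in> K \<and> v (g i) \<le> B" "0 \<le> B"
  shows "v (sum g A) \<le> B"
  using assms
proof (induct A rule: infinite_finite_induct)
  case (insert a A)
  have "v (g a + sum g A) \<le> max (v (g a)) (v (sum g A))"
    using insert by (intro v_add K_sum) auto
  moreover have "max (v (g a)) (v (sum g A)) \<le> B" using insert by auto
  ultimately have "v (g a + sum g A) \<le> B" by (rule order_trans)
  then show ?case using insert.hyps by simp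
qed (auto simp: v_zero)

lemma v_sum_less:
  assumes "\<And>i. i \<in> A \<Longrightarrow> g i \<in> K \<and> v (g i) < B" "0 < B"
  shows "v (sum g A) < B"
  using assms
proof (induct A rule: infinite_finite_induct)
  case (insert a A)
  have "v (g a + sum g A) \<le> max (v (g a)) (v (sum g A))"
    using insert by (intro v_add K_sum) auto
  moreover have "max (v (g a)) (v (sum g A)) < B" using insert by auto
  ultimately have "v (g a + sum g A) < B" by (rule le_less_trans)
  then show ?case using insert.hyps by simp
qed (auto simp: v_zero)

lemma v_add_eq_left:
  assumes x: "x \<in> K" and y: "y \<in> K" and lt: "v y < v x"
  shows "v (x + y) = v x"
proof -
  have "v x = v ((x + y) - y)" by simp
  also have "\<dots> \<le> max (v (x + y)) (v y)" by (rule v_diff[OF K_add[OF x y] y])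
  finally show ?thesis using v_add[OF x y] lt by auto
qed

lemma v_of_rat:
  assumes "\<forall>n>0. v (of_nat n) = 1" and "q \<noteq> 0"
  shows "v (of_rat q) = 1"
proof -
  have v_int: "v (of_int a) = 1" if "a \<noteq> 0" for a
  proof (cases a rule: int_cases)
    case (neg n)
    then have eq: "(of_int a :: complex) = - of_nat (Suc n)" by (simp only: of_int_minus of_int_of_nat_eq)
    show ?thesis unfolding eq v_uminus[OF K_of_nat] using assms(1) zero_less_Suc by blast
  qed (use that assms(1) in simp)
  obtain a b where ab: "quotient_of q = (a, b)" by (cases "quotient_of q") auto
  then have q: "q = of_int a / of_int b" and "b > 0"
    using quotient_of_div quotient_of_denom_pos by blast+
  then have "of_rat q * of_int b = (of_int a :: complex)" by (simp add: of_rat_divide)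
  then have "v (of_rat q) * v (of_int b) = v (of_int a)" using v_mult[OF K_of_rat K_of_int] by metis
  moreover have "a \<noteq> 0" using q assms(2) by auto
  ultimately show ?thesis using v_int \<open>b > 0\<close> by simp
qed

text \<open>If \<open>v\<close> is trivial on \<open>\<rat>\<close> and \<open>v x > 1\<close>, the leading term of a rational
  polynomial in \<open>x\<close> dominates all others, so \<open>x\<close> satisfies no rational relation.\<close>
lemma rat_poly_nonzero_if_v_gt_one:
  assumes triv: "\<forall>n>0. v (of_nat n) = 1" and x: "x \<in> K" "v x > 1"
  shows "(\<exists>i\<le>N. c i \<noteq> 0) \<Longrightarrow> (\<Sum>i\<le>N. of_rat (c i) * x ^ i) \<noteq> 0"
proof (induct N)
  case (Suc N)
  show ?case
  proof (cases "c (Suc N) = 0")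
    case True
    then show ?thesis using Suc by (auto simp: le_Suc_eq)
  next
    case False
    let ?T = "of_rat (c (Suc N)) * x ^ Suc N" and ?R = "\<Sum>i\<le>N. of_rat (c i) * x ^ i"
    have TK: "?T \<in> K" and RK: "?R \<in> K" by (intro K_sum K_mult K_of_rat K_power x)+
    have "v ?T = v (of_rat (c (Suc N))) * v (x ^ Suc N)" by (rule v_mult[OF K_of_rat K_power[OF x(1)]])
    then have vT: "v ?T = v x ^ Suc N" by (simp only: v_of_rat[OF triv False] v_power[OF x(1)] mult_1)
    have "v (of_rat (c i) * x ^ i) < v x ^ Suc N" if "i \<le> N" for i
    proof -
      have "v (of_rat (c i)) \<le> 1"
        using v_of_rat[OF triv, of "c i"] by (cases "c i = 0") (auto simp: v_zero)
      then have "v (of_rat (c i) * x ^ i) \<le> v x ^ i"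
        using v_mult[OF K_of_rat K_power[OF x(1)]] v_power[OF x(1)] v_nonneg[OF K_of_rat] x(2)
        by (simp add: mult_left_le_one_le)
      also have "\<dots> < v x ^ Suc N" using x(2) that by (intro power_strict_increasing) auto
      finally show ?thesis .
    qed
    then have "v ?R < v ?T" unfolding vT using x(2)
      by (intro v_sum_less) (auto intro: K_mult K_of_rat K_power x)
    then have "v (?T + ?R) = v ?T" by (rule v_add_eq_left[OF TK RK])
    then have "?T + ?R \<noteq> 0" using vT x(2) v_zero by auto
    then show ?thesis by (simp add: add.commute)
  qed
qed simp

lemma exists_nat_v_less_one: "\<exists>n>0. v (of_nat n) < 1"
proof (rule ccontr)
  assume small: "\<not> ?thesis"
  have triv: "\<forall>n>0. v (of_nat n) = 1"
  proof (intro allI impI)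
    fix n :: nat assume "n > 0"
    with small have "\<not> v (of_nat n) < 1" by blast
    then show "v (of_nat n) = 1" using v_of_nat_le_one[of n] by simp
  qed
  have le1: "v y \<le> 1" if "y \<in> K" for y
  proof (rule ccontr)
    assume "\<not> v y \<le> 1"
    then show False using K_algebraic[OF that] rat_poly_nonzero_if_v_gt_one[OF triv that] by force
  qed
  obtain x where x: "x \<in> K" "x \<noteq> 0" "v x \<noteq> 1" using v_nontrivial by blast
  have "v (inverse x) * v x = 1" using v_mult[OF K_inverse[OF x(1)] x(1)] x(2) v_one by simp
  moreover have "v (inverse x) * v x \<le> v x"
    using le1[OF K_inverse[OF x(1)]] v_nonneg[OF x(1)] v_nonneg[OF K_inverse[OF x(1)]]
    by (simp add: mult_left_le_one_le)
  ultimately show False using le1[OF x(1)] x(3) by linarith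
qed

lemma residual_char_pos: "0 < residual_char v"
  and v_residual_char: "v (of_nat (residual_char v)) < 1"
  and residual_char_le: "0 < m \<Longrightarrow> v (of_nat m) < 1 \<Longrightarrow> residual_char v \<le> m"
  using LeastI_ex[OF exists_nat_v_less_one] Least_le[of "\<lambda>n. 0 < n \<and> v (of_nat n) < 1" m]
  unfolding residual_char_def by auto

lemma v_of_nat_lt_one_if_residual_char_dvd:
  assumes "residual_char v dvd d"
  shows "v (of_nat d) < 1"
proof -
  obtain k where "d = residual_char v * k" using assms by blast
  then have "v (of_nat d) = v (of_nat (residual_char v)) * v (of_nat k)"
    using v_mult[OF K_of_nat K_of_nat] by simp
  also have "\<dots> \<le> v (of_nat (residual_char v))"
    using v_of_nat_le_one[of k] v_nonneg[OF K_of_nat] by (intro mult_left_le) auto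
  finally show ?thesis using v_residual_char by simp
qed

text \<open>The integers of absolute value \<open>< 1\<close> form an ideal of \<open>\<int>\<close>, generated by
  the residual characteristic.\<close>
lemma v_of_nat_eq_one_if_coprime_residual_char:
  assumes "coprime (residual_char v) d"
  shows "v (of_nat d) = 1"
proof (rule ccontr)
  let ?p = "residual_char v"
  assume "v (of_nat d) \<noteq> 1"
  then have vd: "v (of_nat d) < 1" using v_of_nat_le_one[of d] by simp
  have "(of_nat d :: complex) = of_nat (d mod ?p) + of_nat ?p * of_nat (d div ?p)"
    by (simp only: of_nat_add[symmetric] of_nat_mult[symmetric] mod_mult_div_eq)
  then have eq: "(of_nat (d mod ?p) :: complex) = of_nat d - of_nat ?p * of_nat (d div ?p)"
    by simp
  have "v (of_nat ?p * of_nat (d div ?p) :: complex) \<le> v (of_nat ?p)"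
    using v_mult[OF K_of_nat K_of_nat, of ?p "d div ?p"] v_of_nat_le_one[of "d div ?p"]
      v_nonneg[OF K_of_nat, of ?p]
    by (simp add: mult_left_le)
  then have "v (of_nat (d mod ?p)) < 1" unfolding eq
    using v_diff[OF K_of_nat K_mult[OF K_of_nat K_of_nat], of d ?p "d div ?p"] vd v_residual_char
    by linarith
  then have "d mod ?p = 0"
    using residual_char_le[of "d mod ?p"] mod_less_divisor[OF residual_char_pos, of d]
    by (metis leD neq0_conv)
  then have "?p = 1" using coprime_common_divisor_nat[OF assms dvd_refl] by auto
  then show False using v_residual_char v_one by simp
qed

text \<open>\<open>x / y\<close> is a \<open>d\<close>-th root of unity \<open>\<zeta> \<noteq> 1\<close>, and
  \<open>d = \<Sum>\<^sub>k<\<^sub>d (1 - \<zeta>\<^sup>k)\<close> is divisible by \<open>1 - \<zeta>\<close>;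
  if \<open>d\<close> is a unit then so is \<open>1 - \<zeta>\<close>.\<close>
lemma v_le_v_diff_if_powers_eq:
  assumes x: "x \<in> K" and y: "y \<in> K" and eq: "x ^ d = y ^ d" and ne: "x \<noteq> y" and y0: "y \<noteq> 0"
    and vd: "v (of_nat d) = 1"
  shows "v y \<le> v (x - y)"
proof -
  have d0: "d > 0" using vd v_zero by (cases d) auto
  define z where "z = x * inverse y"
  have zK: "z \<in> K" using x y by (simp add: z_def K_mult K_inverse)
  have zy: "z * y = x" using y0 by (simp add: z_def)
  have zd: "z ^ d = 1" using eq y0 by (simp add: z_def power_mult_distrib power_inverse)
  have vz: "v z = 1"
    using v_power[OF zK, of d] zd v_one v_nonneg[OF zK] d0 power_eq_imp_eq_base[of "v z" d 1] by simp
  have "z ^ d - 1 ^ d = (z - 1) * (\<Sum>i<d. 1 ^ (d - Suc i) * z ^ i)" by (rule power_diff_sumr2)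
  then have geo: "(\<Sum>i<d. z ^ i) = 0" using zd zy ne by auto
  define W where "W = (\<Sum>k<d. \<Sum>i<k. z ^ (k - Suc i))"
  have "(of_nat d :: complex) = (\<Sum>k<d. (1 - z ^ k))" using geo by (simp add: sum_subtractf)
  also have "\<dots> = (\<Sum>k<d. (1 - z) * (\<Sum>i<k. z ^ (k - Suc i)))"
    using power_diff_sumr2[of 1 _ z] by simp
  also have "\<dots> = (1 - z) * W" by (simp add: W_def sum_distrib_left)
  finally have dW: "of_nat d = (1 - z) * W" .
  have WK: "W \<in> K" unfolding W_def by (intro K_sum K_power zK)
  have vW: "v W \<le> 1" unfolding W_def
    by (intro v_sum_le conjI K_sum K_power zK) (auto simp: v_power[OF zK] vz)
  have z1K: "1 - z \<in> K" by (intro K_diff K_one zK)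
  have "1 = v (1 - z) * v W" using vd dW v_mult[OF z1K WK] by simp
  also have "\<dots> \<le> v (1 - z)" using vW v_nonneg[OF z1K] by (intro mult_left_le) auto
  finally have "1 \<le> v (1 - z)" .
  moreover have "v (x - y) = v (1 - z) * v y"
    using zy v_uminus[OF K_mult[OF z1K y]] v_mult[OF z1K y] by (simp add: algebra_simps)
  ultimately show ?thesis using v_nonneg[OF y] by (simp add: mult_le_cancel_right1)
qed

end

section \<open>Dynamics of \<open>z\<^sup>d + t\<close> at a non-Archimedean place\<close>

lemma finite_range_obtains_min:
  fixes u :: "nat \<Rightarrow> 'a::linorder"
  assumes "finite (range u)"
  obtains i where "\<And>j. u i \<le> u j"
proof -
  have "Min (range u) \<in> range u" using assms by (intro Min_in) auto
  then obtain i where "u i = Min (range u)" by auto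
  moreover have "Min (range u) \<le> u j" for j using assms by simp
  ultimately show ?thesis using that by metis
qed

lemma funpow_periodic_mult:
  assumes "(f ^^ n) z = z"
  shows "(f ^^ (k * n)) z = z"
proof (induct k)
  case (Suc k)
  then show ?case using assms by (simp add: funpow_add)
qed simp

lemma funpow_periodic_orbit:
  assumes "(f ^^ n) z = z"
  shows "(f ^^ n) ((f ^^ j) z) = (f ^^ j) z"
proof -
  have "(f ^^ n) ((f ^^ j) z) = (f ^^ (n + j)) z"
    by (simp add: funpow_add)
  also have "\<dots> = (f ^^ (j + n)) z" by (simp only: add.commute)
  also have "\<dots> = (f ^^ j) z" using assms by (simp add: funpow_add)
  finally show ?thesis .
qed

lemma periodic_orbit_obtains_min:
  fixes u :: "'a \<Rightarrow> 'b::linorder"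
  assumes per: "(f ^^ n) z = z" and "n > 0"
  obtains i where "\<And>j. u ((f ^^ i) z) \<le> u ((f ^^ j) z)"
proof -
  have "range (\<lambda>j. u ((f ^^ j) z)) \<subseteq> (\<lambda>j. u ((f ^^ j) z)) ` {..<n}"
  proof
    fix x assume "x \<in> range (\<lambda>j. u ((f ^^ j) z))"
    then obtain j where "x = u ((f ^^ j) z)" by blast
    then have "x = u ((f ^^ (j mod n)) z)" by (simp add: funpow_mod_eq[OF per])
    then show "x \<in> (\<lambda>j. u ((f ^^ j) z)) ` {..<n}" using \<open>n > 0\<close> by simp
  qed
  then have "finite (range (\<lambda>j. u ((f ^^ j) z)))" by (rule finite_subset) simp
  then show ?thesis using that by (rule finite_range_obtains_min) blast
qed

locale unicritical = number_field_set +
  fixes d :: nat and t :: complex and f :: "complex \<Rightarrow> complex"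
  assumes d_ge_2: "d \<ge> 2" and t_in_K: "t \<in> K" and f_eq: "\<And>x. f x = x ^ d + t"
begin

lemma f_in_K: "x \<in> K \<Longrightarrow> f x \<in> K"
  by (simp add: f_eq K_add K_power t_in_K)

lemma funpow_in_K: "x \<in> K \<Longrightarrow> (f ^^ j) x \<in> K"
  by (induct j) (auto simp: f_in_K)

lemma multiplier_in_K: "z \<in> K \<Longrightarrow> (\<Prod>j<n. of_nat d * ((f ^^ j) z) ^ (d - 1)) \<in> K"
  by (intro K_prod K_mult K_of_nat K_power funpow_in_K)

end

locale unicritical_place = unicritical + nonarch_place
begin

lemma v_f_gt:
  assumes x: "x \<in> K" and "1 < v x" and "v t \<le> v x"
  shows "v x < v (f x)"
proof -
  have "v x ^ 1 < v x ^ d" using assms(2) d_ge_2 by (intro power_strict_increasing) auto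
  then have lt: "v x < v (x ^ d)" using v_power[OF x] by simp
  then have "v (x ^ d + t) = v (x ^ d)" using assms(3) by (intro v_add_eq_left K_power x t_in_K) auto
  then show ?thesis using lt by (simp add: f_eq)
qed

lemma v_funpow_strict_mono:
  assumes x: "x \<in> K" and "1 < v x" and "v t \<le> v x"
  shows "strict_mono (\<lambda>j. v ((f ^^ j) x))"
proof -
  have "v x \<le> v ((f ^^ j) x) \<and> v ((f ^^ j) x) < v ((f ^^ Suc j) x)" for j
  proof (induct j)
    case 0
    then show ?case using v_f_gt[OF assms] by simp
  next
    case (Suc j)
    then have "v x \<le> v ((f ^^ Suc j) x)" by simp
    with assms show ?case using v_f_gt[OF funpow_in_K[OF x, of "Suc j"]] by simp
  qed
  then show ?thesis by (simp add: strict_mono_Suc_iff)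
qed

lemma v_t_le_one:
  assumes fin: "finite (range (\<lambda>m. (f ^^ m) 0))"
  shows "v t \<le> 1"
proof (rule ccontr)
  assume "\<not> v t \<le> 1"
  then have "strict_mono (\<lambda>j. v ((f ^^ j) t))" by (intro v_funpow_strict_mono t_in_K) auto
  then have "inj (\<lambda>j. (f ^^ j) t)" by (intro inj_on_imageI2[of v]) (simp add: o_def strict_mono_imp_inj_on)
  moreover have "f 0 = t" using d_ge_2 by (simp add: f_eq power_0_left)
  then have "(f ^^ j) t = (f ^^ Suc j) 0" for j by (simp only: funpow_Suc_right comp_apply)
  then have "range (\<lambda>j. (f ^^ j) t) \<subseteq> range (\<lambda>m. (f ^^ m) 0)" by (metis image_subsetI rangeI)
  ultimately show False using fin finite_subset finite_imageD infinite_UNIV_nat by metis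
qed

lemma funpow_v_le_one:
  assumes "v t \<le> 1" and x: "x \<in> K" "v x \<le> 1"
  shows "v ((f ^^ j) x) \<le> 1"
proof (induct j)
  case (Suc j)
  let ?y = "(f ^^ j) x"
  have y: "?y \<in> K" by (rule funpow_in_K[OF x(1)])
  have "max (v (?y ^ d)) (v t) \<le> 1"
    using v_power[OF y] Suc v_nonneg[OF y] assms(1) by (simp add: power_le_one)
  then have "v (?y ^ d + t) \<le> 1" by (rule order_trans[OF v_add[OF K_power[OF y] t_in_K]])
  then show ?case by (simp add: f_eq[of ?y, symmetric])
qed (use x in simp)

lemma periodic_v_le_one:
  assumes "v t \<le> 1" and x: "x \<in> K" and "n > 0" and per: "(f ^^ n) x = x"
  shows "v x \<le> 1"
proof (rule ccontr)
  assume "\<not> v x \<le> 1"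
  then have "strict_mono (\<lambda>j. v ((f ^^ j) x))" using assms(1) by (intro v_funpow_strict_mono x) auto
  then have "v ((f ^^ 0) x) < v ((f ^^ n) x)" using \<open>n > 0\<close> by (rule strict_monoD)
  then show False using per by simp
qed

lemma v_f_diff:
  assumes "x \<in> K" "y \<in> K"
  shows "v (f x - f y) = v (x - y) * v (\<Sum>i<d. y ^ (d - Suc i) * x ^ i)"
proof -
  have "f x - f y = (x - y) * (\<Sum>i<d. y ^ (d - Suc i) * x ^ i)"
    by (simp add: f_eq power_diff_sumr2)
  then show ?thesis using assms by (simp add: v_mult K_diff K_sum K_mult K_power)
qed

lemma v_f_diff_le:
  assumes x: "x \<in> K" "v x \<le> 1" and y: "y \<in> K" "v y \<le> 1"
  shows "v (f x - f y) \<le> v (x - y)"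
proof -
  have "v (y ^ (d - Suc i) * x ^ i) \<le> 1" for i
    using x y by (simp add: v_mult v_power K_power v_nonneg mult_le_one power_le_one)
  then have "v (\<Sum>i<d. y ^ (d - Suc i) * x ^ i) \<le> 1"
    by (intro v_sum_le) (auto intro: K_mult K_power x y)
  then show ?thesis
    unfolding v_f_diff[OF x(1) y(1)] using v_nonneg[OF K_diff[OF x(1) y(1)]] by (simp add: mult_left_le)
qed

lemma v_f_diff_less:
  assumes x: "x \<in> K" "v x < 1" and y: "y \<in> K" "v y < 1" and "x \<noteq> y"
  shows "v (f x - f y) < v (x - y)"
proof -
  have "v (y ^ (d - Suc i) * x ^ i) < 1" if "i < d" for i
  proof -
    have "v y ^ (d - Suc i) \<le> 1" "v x ^ i \<le> 1"
      using x y v_nonneg by (simp_all add: power_le_one)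
    moreover have "0 < d - Suc i \<or> 0 < i" using that d_ge_2 by arith
    then have "v y ^ (d - Suc i) < 1 \<or> v x ^ i < 1"
      using x y v_nonneg by (auto simp: power_less_one_iff)
    ultimately have "v y ^ (d - Suc i) * v x ^ i < 1"
      using v_nonneg[OF x(1)] v_nonneg[OF y(1)] by (smt (verit) mult_left_le mult_left_le_one_le zero_le_power)
    then show ?thesis using x y by (simp add: v_mult v_power K_power)
  qed
  then have "v (\<Sum>i<d. y ^ (d - Suc i) * x ^ i) < 1"
    by (intro v_sum_less) (auto intro: K_mult K_power x y)
  moreover have "0 < v (x - y)"
    using v_eq_0_iff[OF K_diff[OF x(1) y(1)]] v_nonneg[OF K_diff[OF x(1) y(1)]] \<open>x \<noteq> y\<close> by auto
  ultimately show ?thesis unfolding v_f_diff[OF x(1) y(1)] by simp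
qed

lemma v_orbit_diff_decseq:
  assumes "v t \<le> 1" and x: "x \<in> K" "v x \<le> 1" and y: "y \<in> K" "v y \<le> 1"
  shows "decseq (\<lambda>m. v ((f ^^ m) x - (f ^^ m) y))"
  using v_f_diff_le funpow_in_K funpow_v_le_one assms by (intro decseq_SucI) simp

text \<open>While the orbits of \<open>0\<close> and \<open>z\<close> stay apart, each period brings the
  orbit of \<open>0\<close> back into the open unit disc, where \<open>f\<close> contracts strictly;
  so the distances from that orbit to \<open>z\<close> would take infinitely many values.\<close>
lemma orbits_meet:
  assumes vt: "v t \<le> 1" and fin: "finite (range (\<lambda>m. (f ^^ m) 0))"
    and z: "z \<in> K" "v z < 1" and n: "n > 0" and per: "(f ^^ n) z = z"
  shows "\<exists>m. (f ^^ m) 0 = (f ^^ m) z"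
proof (rule ccontr)
  assume apart: "\<nexists>m. (f ^^ m) 0 = (f ^^ m) z"
  define E where "E m = v ((f ^^ m) 0 - (f ^^ m) z)" for m
  have dec: "decseq E"
    unfolding E_def using z by (intro v_orbit_diff_decseq vt K_zero) (simp_all add: v_zero)
  have zk: "(f ^^ (k * n)) z = z" for k by (rule funpow_periodic_mult[OF per])
  have step: "E (Suc k * n) < E (k * n)" for k
  proof -
    let ?a = "(f ^^ (k * n)) 0"
    have aK: "?a \<in> K" by (rule funpow_in_K[OF K_zero])
    have "E (k * n) \<le> E 0" using dec by (simp add: decseqD)
    then have "v (?a - z) \<le> v z" by (simp add: E_def zk v_uminus[OF z(1)])
    moreover have "v ?a \<le> max (v (?a - z)) (v z)" using v_add[OF K_diff[OF aK z(1)] z(1)] by simp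
    ultimately have "v ?a < 1" using z(2) by linarith
    moreover have "?a \<noteq> z"
    proof
      assume "?a = z"
      then have "(f ^^ (k * n)) 0 = (f ^^ (k * n)) z" using zk by simp
      with apart show False by blast
    qed
    ultimately have "v (f ?a - f z) < v (?a - z)" by (intro v_f_diff_less aK z)
    then have "E (Suc (k * n)) < E (k * n)" by (simp add: E_def zk per)
    moreover have "E (Suc k * n) \<le> E (Suc (k * n))" using n by (intro decseqD[OF dec]) simp
    ultimately show ?thesis by simp
  qed
  have "strict_mono (\<lambda>k. - E (k * n))" using step by (simp add: strict_mono_Suc_iff)
  then have inj: "inj (\<lambda>k. - E (k * n))" by (rule strict_mono_imp_inj_on)
  have "range (\<lambda>k. - E (k * n)) \<subseteq> (\<lambda>a. - v (a - z)) ` range (\<lambda>m. (f ^^ m) 0)"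
    by (auto simp: E_def zk)
  then have "finite (range (\<lambda>k. - E (k * n)))" by (rule finite_subset) (use fin in simp)
  then have "finite (UNIV :: nat set)" by (rule finite_imageD[OF _ inj])
  then show False by simp
qed

lemma periodic_orbit_v_le_one:
  assumes "v t \<le> 1" "z \<in> K" "n > 0" "(f ^^ n) z = z"
  shows "v ((f ^^ j) z) \<le> 1"
  by (rule periodic_v_le_one[OF assms(1) funpow_in_K[OF assms(2)] assms(3) funpow_periodic_orbit[OF assms(4)]])

text \<open>With \<open>z\<close> of least absolute value on the cycle, the distance \<open>E k\<close> just before
  the first meeting is at least \<open>v z = E 0\<close>, yet \<open>E\<close> drops strictly at the first step.\<close>
lemma periodic_orbit_v_eq_one:
  assumes vd: "v (of_nat d) = 1" and vt: "v t \<le> 1" and fin: "finite (range (\<lambda>m. (f ^^ m) 0))"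
    and z0: "z0 \<in> K" and n: "n > 0" and per: "(f ^^ n) z0 = z0"
    and nz: "\<And>j. (f ^^ j) z0 \<noteq> 0"
  shows "v ((f ^^ j) z0) = 1"
proof (rule ccontr)
  assume "v ((f ^^ j) z0) \<noteq> 1"
  moreover have "v ((f ^^ j) z0) \<le> 1" by (rule periodic_orbit_v_le_one[OF vt z0 n per])
  ultimately have small: "v ((f ^^ j) z0) < 1" by linarith
  obtain i where min: "\<And>j. v ((f ^^ i) z0) \<le> v ((f ^^ j) z0)"
    using periodic_orbit_obtains_min[OF per n] by blast
  define z where "z = (f ^^ i) z0"
  have z: "z \<in> K" "v z < 1" "z \<noteq> 0" "(f ^^ n) z = z"
    using funpow_in_K[OF z0] le_less_trans[OF min small] nz funpow_periodic_orbit[OF per]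
    unfolding z_def by blast+
  have z_min: "v z \<le> v ((f ^^ m) z)" for m
    using min[of "m + i"] by (simp add: z_def funpow_add)
  define E where "E m = v ((f ^^ m) 0 - (f ^^ m) z)" for m
  have dec: "decseq E"
    unfolding E_def using z by (intro v_orbit_diff_decseq vt K_zero) (simp_all add: v_zero)
  have E1: "E 1 < E 0"
    using v_f_diff_less[OF K_zero _ z(1,2)] z(3) by (simp add: E_def v_zero)
  obtain k where apart: "(f ^^ k) 0 \<noteq> (f ^^ k) z" and meet: "(f ^^ Suc k) 0 = (f ^^ Suc k) z"
    using exists_least_lemma[of "\<lambda>m. (f ^^ m) 0 = (f ^^ m) z"] orbits_meet[OF vt fin z(1,2) n z(4)] z(3)
    by auto
  have powers: "((f ^^ k) 0) ^ d = ((f ^^ k) z) ^ d" using meet by (simp add: f_eq)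
  have "k \<noteq> 0"
  proof
    assume "k = 0"
    then have "z ^ d = 0" using powers d_ge_2 by (simp add: power_0_left)
    then show False using z(3) by simp
  qed
  have "v z \<le> v ((f ^^ k) z)" by (rule z_min)
  also have "\<dots> \<le> E k"
  proof -
    have "(f ^^ k) z \<in> K" "(f ^^ k) z \<noteq> 0"
      using funpow_in_K[OF z(1)] nz[of "k + i"] by (simp_all add: z_def funpow_add)
    then show ?thesis unfolding E_def
      by (intro v_le_v_diff_if_powers_eq[OF funpow_in_K[OF K_zero] _ powers apart _ vd])
  qed
  also have "\<dots> \<le> E 1" using \<open>k \<noteq> 0\<close> by (intro decseqD[OF dec]) simp
  also have "\<dots> < E 0" by (rule E1)
  finally show False by (simp add: E_def v_uminus[OF z(1)])
qed

lemma v_multiplier: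
  assumes "z0 \<in> K"
  shows "v (\<Prod>j<n. of_nat d * ((f ^^ j) z0) ^ (d - 1)) = (\<Prod>j<n. v (of_nat d) * v ((f ^^ j) z0) ^ (d - 1))"
  using assms by (simp add: v_prod v_mult v_power K_mult K_of_nat K_power funpow_in_K)

lemma v_multiplier_lt_one:
  assumes fin: "finite (range (\<lambda>m. (f ^^ m) 0))" and z0: "z0 \<in> K"
    and n: "n > 0" and per: "(f ^^ n) z0 = z0" and "residual_char v dvd d"
  shows "v (\<Prod>j<n. of_nat d * ((f ^^ j) z0) ^ (d - 1)) < 1"
proof -
  have vd: "v (of_nat d) < 1" "0 \<le> v (of_nat d)"
    using v_of_nat_lt_one_if_residual_char_dvd assms(5) v_nonneg[OF K_of_nat] by auto
  have "v ((f ^^ j) z0) ^ (d - 1) \<le> 1" for j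
    using periodic_orbit_v_le_one[OF v_t_le_one[OF fin] z0 n per] v_nonneg[OF funpow_in_K[OF z0]]
    by (simp add: power_le_one)
  then have "(\<Prod>j<n. v (of_nat d) * v ((f ^^ j) z0) ^ (d - 1)) \<le> (\<Prod>j<n. v (of_nat d))"
    using vd v_nonneg[OF funpow_in_K[OF z0]] by (intro prod_mono) (simp add: mult_left_le)
  also have "\<dots> \<le> v (of_nat d)" using power_decreasing[of 1 n "v (of_nat d)"] n vd by simp
  finally show ?thesis using vd v_multiplier[OF z0] by simp
qed

lemma v_multiplier_eq_one:
  assumes fin: "finite (range (\<lambda>m. (f ^^ m) 0))" and z0: "z0 \<in> K"
    and n: "n > 0" and per: "(f ^^ n) z0 = z0" and "coprime (residual_char v) d"
    and nz: "(\<Prod>j<n. of_nat d * ((f ^^ j) z0) ^ (d - 1)) \<noteq> 0"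
  shows "v (\<Prod>j<n. of_nat d * ((f ^^ j) z0) ^ (d - 1)) = 1"
proof -
  have vd: "v (of_nat d) = 1" by (rule v_of_nat_eq_one_if_coprime_residual_char[OF assms(5)])
  have "(f ^^ j) z0 \<noteq> 0" for j
  proof -
    have "(f ^^ (j mod n)) z0 \<noteq> 0" using nz n d_ge_2 by (auto simp: power_0_left)
    then show ?thesis using funpow_mod_eq[OF per] by simp
  qed
  then show ?thesis
    using periodic_orbit_v_eq_one[OF vd v_t_le_one[OF fin] fin z0 n per] vd v_multiplier[OF z0]
    by simp
qed

end

lemma has_field_derivative_funpow:
  assumes "\<And>y. (f has_field_derivative f' y) (at y)"
  shows "((f ^^ n) has_field_derivative (\<Prod>j<n. f' ((f ^^ j) x))) (at x)"
proof (induct n)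
  case (Suc n)
  show ?case
    using DERIV_chain[OF assms Suc] by (simp add: prod.lessThan_Suc mult.commute comp_def)
qed (simp add: id_def)

lemma unicritical_multiplier:
  fixes t :: complex
  assumes "periodic_multiplier (monom 1 d + [:t:]) lam"
  obtains z n where "n > 0" "((\<lambda>x. x ^ d + t) ^^ n) z = z"
    "lam = (\<Prod>j<n. of_nat d * (((\<lambda>x. x ^ d + t) ^^ j) z) ^ (d - 1))"
proof -
  have "poly (monom 1 d + [:t:]) = (\<lambda>x. x ^ d + t)" by (simp add: fun_eq_iff poly_monom)
  then obtain z n where "n > 0" "((\<lambda>x. x ^ d + t) ^^ n) z = z"
    and lam: "lam = deriv ((\<lambda>x. x ^ d + t) ^^ n) z"
    using assms unfolding periodic_multiplier_def by auto
  moreover have "((\<lambda>x. x ^ d + t) has_field_derivative of_nat d * y ^ (d - 1)) (at y)" for y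
    by (auto intro!: derivative_eq_intros)
  note DERIV_imp_deriv[OF has_field_derivative_funpow[OF this]]
  ultimately show ?thesis using that by simp
qed

lemma unicritical_pcf_zero_orbit:
  fixes t :: complex
  assumes "d \<ge> 2" and "post_critically_finite (monom 1 d + [:t:])"
  shows "finite (range (\<lambda>m. ((\<lambda>x. x ^ d + t) ^^ m) 0))"
proof -
  have "poly (monom 1 d + [:t:]) = (\<lambda>x. x ^ d + t)" by (simp add: fun_eq_iff poly_monom)
  moreover have "poly (pderiv (monom 1 d + [:t:])) 0 = 0"
    using assms(1) by (simp add: pderiv_add pderiv_monom poly_monom power_0_left)
  ultimately show ?thesis using assms(2) unfolding post_critically_finite_def by simp
qed

theorem proposition5p4:
  fixes d :: nat and t lam :: complex
  assumes "d \<ge> 2"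
    and "post_critically_finite (monom 1 d + [:t:])"
    and "periodic_multiplier (monom 1 d + [:t:]) lam"
    and "lam \<noteq> 0"
  shows "\<exists>K. number_field K \<and> lam \<in> K \<and>
     (\<forall>v. nonarch_abs K v \<longrightarrow>
        (residual_char v dvd d \<longrightarrow> v lam < 1) \<and>
        (coprime (residual_char v) d \<longrightarrow> v lam = 1))"
proof -
  define f where "f = (\<lambda>x::complex. x ^ d + t)"
  obtain z n where n: "n > 0" and per: "(f ^^ n) z = z"
    and lam: "lam = (\<Prod>j<n. of_nat d * ((f ^^ j) z) ^ (d - 1))"
    using unicritical_multiplier[OF assms(3)] unfolding f_def by blast
  have fin: "finite (range (\<lambda>m. (f ^^ m) 0))"
    using unicritical_pcf_zero_orbit[OF assms(1,2)] unfolding f_def .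
  obtain K where K: "number_field K" "t \<in> K" "z \<in> K"
    using number_field_containing_periodic_point[OF assms(1) _ n] fin per unfolding f_def by blast
  interpret unicritical K d t f
    using K assms(1) by unfold_locales (simp_all add: f_def)
  have "lam \<in> K" unfolding lam by (rule multiplier_in_K[OF K(3)])
  moreover have "(residual_char v dvd d \<longrightarrow> v lam < 1) \<and> (coprime (residual_char v) d \<longrightarrow> v lam = 1)"
    if "nonarch_abs K v" for v
  proof -
    interpret unicritical_place K d t f v
      using that by unfold_locales
    show ?thesis
      unfolding lam using v_multiplier_lt_one[OF fin K(3) n per] v_multiplier_eq_one[OF fin K(3) n per]
        assms(4) lam by blast
  qed
  ultimately show ?thesis using K(1) by blast
qed

end
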